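(* The map $D:\mathbb{Q}^{\mathscr{P}}\to\mathbb{Q}^{\mathscr{P}}$, $Df=S_2f-S_2\odot f$, is linear, satisfies the Leibniz rule $D(f\odot g)=(Df)\odot g+f\odot(Dg)$, and satisfies $D\langle f\rangle_q=\langle Df\rangle_q$ for all $f\in\mathbb{Q}^{\mathscr{P}}$, where on the left $D=q\frac{d}{dq}$.
   Context: $\mathscr{P}$ is the set of partitions $\lambda=(\lambda_1\ge\lambda_2\ge\dots)$, $|\lambda|=\sum\lambda_i$; $\mathbb{Q}^{\mathscr{P}}$ the functions $\mathscr{P}\to\mathbb{Q}$. $\langle f\rangle_q=\frac{\sum_\lambda f(\lambda)q^{|\lambda|}}{\sum_\lambda q^{|\lambda|}}$. $S_2(\lambda)=-\frac1{24}+\sum_i\lambda_i$ and $S_2f$ is the pointwise product. Induced product: with $u_\lambda=\prod_{i:\lambda_i>0}u_{\lambda_i}$ and $\langle f\rangle_{\vec u}=\frac{\sum_\lambda f(\lambda)u_\lambda}{\sum_\lambda u_\lambda}\in\mathbb{Q}[[u_1,u_2,\dots]]$ (a linear bijection in $f$), $f\odot g$ is defined by $\langle f\odot g\rangle_{\vec u}=\langle f\rangle_{\vec u}\langle g\rangle_{\vec u}$. *)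

theory Defs
  imports Main "HOL-Library.Multiset" "HOL-Computational_Algebra.Formal_Power_Series"
begin

typedef partition = "{M :: nat multiset. 0 \<notin># M}"
  by (rule exI[of _ "{#}"]) simp

definition psize :: "partition \<Rightarrow> nat" where
  "psize p = sum_mset (Rep_partition p)"

definition S2 :: "partition \<Rightarrow> rat" where
  "S2 p = - 1/24 + of_nat (psize p)"

text \<open>Elements of Q[[u_1,u_2,...]]: monomials prod u_i^{m_i} with finitely many
  m_i > 0 correspond bijectively to partitions (lambda with multiplicities m_i),
  the monomial of lambda being u_lambda. A series is its coefficient function.\<close>
type_synonym useries = "partition \<Rightarrow> rat"

text \<open>Product of series in Q[[u_1,u_2,...]] (u_a * u_b = u_(a union b)).\<close>
definition umul :: "useries \<Rightarrow> useries \<Rightarrow> useries" where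
  "umul F G p = (\<Sum>(a, b) \<in> {(a, b). Rep_partition a + Rep_partition b = Rep_partition p}.
                    F a * G b)"

definition useries_of :: "(partition \<Rightarrow> rat) \<Rightarrow> useries" where
  "useries_of f = (\<lambda>p. f p)"

definition ubracket :: "(partition \<Rightarrow> rat) \<Rightarrow> useries" where
  "ubracket f = (THE F. umul F (useries_of (\<lambda>_. 1)) = useries_of f)"

definition odot :: "(partition \<Rightarrow> rat) \<Rightarrow> (partition \<Rightarrow> rat) \<Rightarrow> (partition \<Rightarrow> rat)" where
  "odot f g = (THE h. ubracket h = umul (ubracket f) (ubracket g))"

definition qbracket :: "(partition \<Rightarrow> rat) \<Rightarrow> rat fps" where
  "qbracket f = Abs_fps (\<lambda>n. \<Sum>p \<in> {p. psize p = n}. f p)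
              / Abs_fps (\<lambda>n. of_nat (card {p. psize p = n}))"

definition Dop :: "(partition \<Rightarrow> rat) \<Rightarrow> (partition \<Rightarrow> rat)" where
  "Dop f = (\<lambda>p. S2 p * f p - odot S2 f p)"

end

theory Submission
  imports Defs
begin

(* Identify f with the series F = sum f(lambda) u_lambda and let Z = sum u_lambda. Then
  <f>_u = F / Z and f odot g corresponds to F G / Z; Z is invertible, with inverse
  prod_i (1 - u_i). Multiplication by |lambda| is a derivation E of Q[[u_1,u_2,...]], and
  multiplication by S_2 is E - 1/24, so E F = E (Z (F/Z)) = (E Z) (F/Z) + Z E (F/Z) gives
  D F = Z E (F/Z). Linearity and the Leibniz rule for odot follow because E is a derivation,
  and the statement about <f>_q follows because the substitution u_i := q^i is a ring
  homomorphism into Q[[q]] that turns E into q d/dq. *)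

lemma sum_Pow_alternating:
  assumes "finite S" "S \<noteq> {}"
  shows "(\<Sum>T\<in>Pow S. (- 1 :: 'a :: ring_1) ^ card T) = 0"
  using card_subsupersets_even_odd[of S "{}"] assms
  by (intro sum_alternating_cancels) (auto simp: Pow_def)

lemma finite_multisets_bounded:
  assumes "finite A"
  shows "finite {M. set_mset M \<subseteq> A \<and> size M \<le> n}"
proof -
  have "{M. set_mset M \<subseteq> A \<and> size M \<le> n} = (\<Union>k\<le>n. multisets_of_size A k)"
    by (auto simp: multisets_of_size_def)
  then show ?thesis
    using assms by auto
qed

lemma finite_submultisets: "finite {N. N \<subseteq># M}"
  by (rule finite_subset[OF _ finite_multisets_bounded[of "set_mset M" "size M"]])
    (auto dest: set_mset_mono size_mset_mono)

lemma size_le_sum_mset_nat: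
  fixes M :: "nat multiset"
  assumes "0 \<notin># M"
  shows "size M \<le> sum_mset M"
  using assms by (induction M) auto

lemma mset_set_subset_mset:
  assumes "B \<subseteq> set_mset M"
  shows "mset_set B \<subseteq># M"
proof -
  have "mset_set B \<subseteq># mset_set (set_mset M)"
    using assms by (simp add: finite_subset)
  then show ?thesis
    using mset_set_set_mset_msubset subset_mset.order_trans by blast
qed

lemma zero_not_in_Rep_partition: "0 \<notin># Rep_partition p"
  using Rep_partition by simp

lemma Rep_Abs_partition: "0 \<notin># M \<Longrightarrow> Rep_partition (Abs_partition M) = M"
  by (simp add: Abs_partition_inverse)

lemma finite_Collect_Rep_partition: "finite {M. P M} \<Longrightarrow> finite {p. P (Rep_partition p)}"
  using finite_vimageI[of "{M. P M}" Rep_partition] Rep_partition_inject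
  by (simp add: inj_def vimage_def)

instantiation partition :: cancel_comm_monoid_add
begin

definition zero_partition_def: "0 = Abs_partition {#}"
definition plus_partition_def: "p + q = Abs_partition (Rep_partition p + Rep_partition q)"
definition minus_partition_def: "p - q = Abs_partition (Rep_partition p - Rep_partition q)"

lemma Rep_partition_zero [simp]: "Rep_partition 0 = {#}"
  by (simp add: zero_partition_def Rep_Abs_partition)

lemma Rep_partition_plus [simp]: "Rep_partition (p + q) = Rep_partition p + Rep_partition q"
  by (simp add: plus_partition_def Rep_Abs_partition zero_not_in_Rep_partition)

lemma Rep_partition_minus [simp]: "Rep_partition (p - q) = Rep_partition p - Rep_partition q"
proof -
  have "0 \<notin># Rep_partition p - Rep_partition q"
    using zero_not_in_Rep_partition[of p] by (auto dest: in_diffD)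
  then show ?thesis
    by (simp add: minus_partition_def Rep_Abs_partition)
qed

instance
  by standard (simp_all add: Rep_partition_inject[symmetric] ac_simps)

end

lemma psize_zero [simp]: "psize 0 = 0"
  by (simp add: psize_def)

lemma psize_add [simp]: "psize (p + q) = psize p + psize q"
  by (simp add: psize_def)

lemma finite_psize_eq: "finite {p. psize p = n}"
proof -
  have "Rep_partition p \<in> {M. set_mset M \<subseteq> {..n} \<and> size M \<le> n}" if "psize p = n" for p
    using that size_le_sum_mset_nat[OF zero_not_in_Rep_partition[of p]]
    by (auto simp: psize_def dest!: sum_mset.remove)
  then show ?thesis
    using finite_Collect_Rep_partition[OF finite_multisets_bounded[of "{..n}" n]]
    by (auto intro: rev_finite_subset)
qed

lemma finite_psize_le: "finite {p. psize p \<le> n}"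
proof -
  have "{p. psize p \<le> n} = (\<Union>k\<le>n. {p. psize p = k})"
    by auto
  then show ?thesis
    by (simp add: finite_psize_eq)
qed

definition subpartitions :: "partition \<Rightarrow> partition set" where
  "subpartitions p = {q. Rep_partition q \<subseteq># Rep_partition p}"

definition splittings :: "partition \<Rightarrow> (partition \<times> partition) set" where
  "splittings p = {(a, b). a + b = p}"

lemma finite_subpartitions: "finite (subpartitions p)"
  unfolding subpartitions_def by (rule finite_Collect_Rep_partition[OF finite_submultisets])

lemma splittings_eq_image: "splittings p = (\<lambda>b. (p - b, b)) ` subpartitions p"
proof (intro equalityI subsetI)
  fix x assume "x \<in> splittings p"
  then obtain a b where "x = (a, b)" "a + b = p"
    by (auto simp: splittings_def)
  then show "x \<in> (\<lambda>b. (p - b, b)) ` subpartitions p"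
    by (auto simp: subpartitions_def intro!: image_eqI[where x = b])
next
  fix x assume "x \<in> (\<lambda>b. (p - b, b)) ` subpartitions p"
  then show "x \<in> splittings p"
    by (auto simp: subpartitions_def splittings_def Rep_partition_inject[symmetric])
qed

lemma finite_splittings: "finite (splittings p)"
  by (simp add: splittings_eq_image finite_subpartitions)

lemma umul_splittings: "umul F G p = (\<Sum>(a, b)\<in>splittings p. F a * G b)"
  unfolding umul_def splittings_def by (simp add: Rep_partition_inject[symmetric])

lemma umul_commute: "umul F G = umul G F"
proof
  fix p
  show "umul F G p = umul G F p"
    unfolding umul_splittings
    by (rule sum.reindex_bij_witness[of _ prod.swap prod.swap])
      (auto simp: splittings_def add.commute)
qed

lemma sum_splittings_assoc_left:
  "(\<Sum>(x, c)\<in>splittings p. \<Sum>(a, b)\<in>splittings x. h a b c) = (\<Sum>(a, b, c) | a + b + c = p. h a b c)"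
proof -
  have "(\<Sum>(x, c)\<in>splittings p. \<Sum>(a, b)\<in>splittings x. h a b c)
      = (\<Sum>q\<in>splittings p. \<Sum>r\<in>splittings (fst q). h (fst r) (snd r) (snd q))"
    by (simp add: split_def)
  also have "\<dots> = (\<Sum>(q, r)\<in>Sigma (splittings p) (\<lambda>q. splittings (fst q)). h (fst r) (snd r) (snd q))"
    by (rule sum.Sigma) (simp_all add: finite_splittings)
  also have "\<dots> = (\<Sum>(a, b, c) | a + b + c = p. h a b c)"
    by (rule sum.reindex_bij_witness[of _ "\<lambda>(a, b, c). ((a + b, c), (a, b))" "\<lambda>(q, r). (fst r, snd r, snd q)"])
      (auto simp: splittings_def)
  finally show ?thesis .
qed

lemma sum_splittings_assoc_right:
  "(\<Sum>(a, y)\<in>splittings p. \<Sum>(b, c)\<in>splittings y. h a b c) = (\<Sum>(a, b, c) | a + b + c = p. h a b c)"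
proof -
  have "(\<Sum>(a, y)\<in>splittings p. \<Sum>(b, c)\<in>splittings y. h a b c)
      = (\<Sum>q\<in>splittings p. \<Sum>r\<in>splittings (snd q). h (fst q) (fst r) (snd r))"
    by (simp add: split_def)
  also have "\<dots> = (\<Sum>(q, r)\<in>Sigma (splittings p) (\<lambda>q. splittings (snd q)). h (fst q) (fst r) (snd r))"
    by (rule sum.Sigma) (simp_all add: finite_splittings)
  also have "\<dots> = (\<Sum>(a, b, c) | a + b + c = p. h a b c)"
    by (rule sum.reindex_bij_witness[of _ "\<lambda>(a, b, c). ((a, b + c), (b, c))" "\<lambda>(q, r). (fst q, fst r, snd r)"])
      (auto simp: splittings_def add.assoc)
  finally show ?thesis .
qed

lemma umul_assoc: "umul (umul F G) H = umul F (umul G H)"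
proof
  fix p
  have "umul (umul F G) H p = (\<Sum>(a, b, c) | a + b + c = p. F a * G b * H c)"
    unfolding umul_splittings sum_splittings_assoc_left[symmetric]
    by (simp add: split_def sum_distrib_right)
  also have "\<dots> = umul F (umul G H) p"
    unfolding umul_splittings sum_splittings_assoc_right[symmetric]
    by (simp add: split_def sum_distrib_left mult.assoc)
  finally show "umul (umul F G) H p = umul F (umul G H) p" .
qed

lemma umul_add_left: "umul (\<lambda>p. F p + G p) H = (\<lambda>p. umul F H p + umul G H p)"
  by (rule ext) (simp add: umul_splittings split_def distrib_right sum.distrib)

lemma umul_delta_left: "umul (\<lambda>p. if p = 0 then c else 0) F = (\<lambda>p. c * F p)"
proof
  fix p
  have "umul (\<lambda>p. if p = 0 then c else 0) F p = (\<Sum>x\<in>splittings p. if x = (0, p) then c * F p else 0)"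
    unfolding umul_splittings by (intro sum.cong) (auto simp: splittings_def split: if_splits)
  also have "\<dots> = c * F p"
    using finite_splittings[of p] by (simp add: splittings_def)
  finally show "umul (\<lambda>p. if p = 0 then c else 0) F p = c * F p" .
qed

(* A type copy of useries, so that Q[[u_1,u_2,...]] can be made an instance of comm_ring_1. *)
typedef useries_ring = "UNIV :: useries set"
  morphisms ucoeff Useries ..

declare Useries_inverse [simplified, simp] ucoeff_inverse [simp]

lemma Useries_eq_iff: "Useries F = x \<longleftrightarrow> F = ucoeff x"
  by auto

lemma useries_eqI: "(\<And>p. ucoeff x p = ucoeff y p) \<Longrightarrow> x = y"
  by (metis ext ucoeff_inverse)

definition uconst :: "rat \<Rightarrow> useries_ring" where
  "uconst c = Useries (\<lambda>p. if p = 0 then c else 0)"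

instantiation useries_ring :: comm_ring_1
begin

definition "0 = Useries (\<lambda>_. 0)"
definition "1 = uconst 1"
definition "x + y = Useries (\<lambda>p. ucoeff x p + ucoeff y p)"
definition "x - y = Useries (\<lambda>p. ucoeff x p - ucoeff y p)"
definition "- x = Useries (\<lambda>p. - ucoeff x p)"
definition "x * y = Useries (umul (ucoeff x) (ucoeff y))"

instance
proof
  fix x y z :: useries_ring
  show "x * y * z = x * (y * z)"
    by (simp add: times_useries_ring_def umul_assoc)
  show "x * y = y * x"
    by (simp add: times_useries_ring_def umul_commute)
  show "1 * x = x"
    by (simp add: times_useries_ring_def one_useries_ring_def uconst_def umul_delta_left)
  show "(x + y) * z = x * z + y * z"
    by (simp add: times_useries_ring_def plus_useries_ring_def umul_add_left)
  show "(0::useries_ring) \<noteq> 1"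
  proof
    assume "(0::useries_ring) = 1"
    then have "ucoeff 0 0 = ucoeff (1::useries_ring) 0"
      by simp
    then show False
      by (simp add: zero_useries_ring_def one_useries_ring_def uconst_def)
  qed
qed (simp_all add: zero_useries_ring_def plus_useries_ring_def minus_useries_ring_def
       uminus_useries_ring_def algebra_simps)

end

lemma ucoeff_add [simp]: "ucoeff (x + y) p = ucoeff x p + ucoeff y p"
  by (simp add: plus_useries_ring_def)

lemma ucoeff_diff [simp]: "ucoeff (x - y) p = ucoeff x p - ucoeff y p"
  by (simp add: minus_useries_ring_def)

lemma ucoeff_mult: "ucoeff (x * y) = umul (ucoeff x) (ucoeff y)"
  by (simp add: times_useries_ring_def)

lemma ucoeff_one: "ucoeff 1 p = (if p = 0 then 1 else 0)"
  by (simp add: one_useries_ring_def uconst_def)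

lemma ucoeff_uconst_mult [simp]: "ucoeff (uconst c * x) p = c * ucoeff x p"
  by (simp add: ucoeff_mult uconst_def umul_delta_left)

definition partition_gf :: useries_ring where
  "partition_gf = Useries (\<lambda>_. 1)"

(* The series prod_i (1 - u_i): a partition with distinct parts contributes
  (-1)^(number of parts), all others 0. *)
definition partition_gf_inv :: useries_ring where
  "partition_gf_inv = Useries (\<lambda>p. if mset_set (set_mset (Rep_partition p)) = Rep_partition p
                                     then (- 1) ^ size (Rep_partition p) else 0)"

lemma ucoeff_partition_gf [simp]: "ucoeff partition_gf = (\<lambda>_. 1)"
  by (simp add: partition_gf_def)

lemma sum_partition_gf_inv_subpartitions:
  "(\<Sum>b\<in>subpartitions p. ucoeff partition_gf_inv b) = (\<Sum>B\<in>Pow (set_mset (Rep_partition p)). (- 1) ^ card B)"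
proof -
  let ?strict = "{b \<in> subpartitions p. mset_set (set_mset (Rep_partition b)) = Rep_partition b}"
  have "(\<Sum>b\<in>subpartitions p. ucoeff partition_gf_inv b) = (\<Sum>b\<in>?strict. (- 1) ^ size (Rep_partition b))"
    by (rule sum.mono_neutral_cong_right) (auto simp: finite_subpartitions partition_gf_inv_def)
  also have "\<dots> = (\<Sum>B\<in>Pow (set_mset (Rep_partition p)). (- 1) ^ card B)"
  proof (rule sum.reindex_bij_witness[of _ "\<lambda>B. Abs_partition (mset_set B)" "\<lambda>b. set_mset (Rep_partition b)"])
    fix B assume B: "B \<in> Pow (set_mset (Rep_partition p))"
    then have "finite B"
      using finite_subset by auto
    moreover have Rep: "Rep_partition (Abs_partition (mset_set B)) = mset_set B"
      using B zero_not_in_Rep_partition[of p] \<open>finite B\<close> by (intro Rep_Abs_partition) auto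
    ultimately show "set_mset (Rep_partition (Abs_partition (mset_set B))) = B"
      and "Abs_partition (mset_set B) \<in> ?strict"
      using B mset_set_subset_mset by (auto simp: subpartitions_def)
  next
    fix b assume b: "b \<in> ?strict"
    then show "Abs_partition (mset_set (set_mset (Rep_partition b))) = b"
      and "set_mset (Rep_partition b) \<in> Pow (set_mset (Rep_partition p))"
      by (auto simp: subpartitions_def Rep_partition_inverse dest: set_mset_mono)
    have "card (set_mset (Rep_partition b)) = size (Rep_partition b)"
      using b by (metis (mono_tags) mem_Collect_eq size_mset_set)
    then show "(- 1) ^ card (set_mset (Rep_partition b)) = (- 1) ^ size (Rep_partition b)"
      by simp
  qed
  finally show ?thesis .
qed

lemma partition_gf_mult_inv: "partition_gf * partition_gf_inv = 1"
proof (rule useries_eqI)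
  fix p
  have "ucoeff (partition_gf * partition_gf_inv) p = (\<Sum>(a, b)\<in>splittings p. ucoeff partition_gf_inv b)"
    by (simp add: ucoeff_mult umul_splittings)
  also have "\<dots> = (\<Sum>b\<in>subpartitions p. ucoeff partition_gf_inv b)"
    by (simp add: splittings_eq_image sum.reindex inj_on_def)
  also have "\<dots> = ucoeff 1 p"
    using sum_Pow_alternating[where 'a = rat and S = "set_mset (Rep_partition p)"]
    by (simp add: sum_partition_gf_inv_subpartitions ucoeff_one Rep_partition_inject[symmetric])
  finally show "ucoeff (partition_gf * partition_gf_inv) p = ucoeff 1 p" .
qed

lemma partition_gf_inv_mult: "partition_gf_inv * partition_gf = 1"
  using partition_gf_mult_inv by (simp add: mult.commute)

lemma partition_gf_mult_cancel: "partition_gf * (x * partition_gf_inv) = x"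
  by (metis mult.left_commute mult_1_right partition_gf_mult_inv)

lemma mult_partition_gf_eq_iff: "x * partition_gf = y \<longleftrightarrow> x = y * partition_gf_inv"
  by (metis mult.assoc mult.commute mult_1_right partition_gf_mult_inv)

lemma mult_partition_gf_inv_eq_iff: "x * partition_gf_inv = y \<longleftrightarrow> x = y * partition_gf"
  by (metis mult.assoc mult.commute mult_1_right partition_gf_mult_inv)

lemma ubracket_conv: "ubracket f = ucoeff (Useries f * partition_gf_inv)"
  unfolding ubracket_def useries_of_def
proof (rule the_equality)
  fix F assume "umul F (\<lambda>_. 1) = f"
  then have "Useries F * partition_gf = Useries f"
    by (simp add: ucoeff_inject[symmetric] ucoeff_mult)
  then show "F = ucoeff (Useries f * partition_gf_inv)"
    by (simp add: mult_partition_gf_eq_iff Useries_eq_iff)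
next
  have "umul (ucoeff (Useries f * partition_gf_inv)) (\<lambda>_. 1) = ucoeff (Useries f * partition_gf_inv * partition_gf)"
    by (simp add: ucoeff_mult)
  then show "umul (ucoeff (Useries f * partition_gf_inv)) (\<lambda>_. 1) = f"
    by (simp add: mult.assoc partition_gf_inv_mult)
qed

lemma odot_conv: "odot f g = ucoeff (Useries f * Useries g * partition_gf_inv)"
  unfolding odot_def
proof (rule the_equality)
  fix h assume "ubracket h = umul (ubracket f) (ubracket g)"
  then have "Useries h * partition_gf_inv = (Useries f * partition_gf_inv) * (Useries g * partition_gf_inv)"
    by (simp add: ubracket_conv ucoeff_mult[symmetric] ucoeff_inject)
  then have "Useries h = (Useries f * partition_gf_inv) * (Useries g * partition_gf_inv) * partition_gf"
    by (simp add: mult_partition_gf_inv_eq_iff)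
  also have "\<dots> = Useries f * Useries g * partition_gf_inv * (partition_gf_inv * partition_gf)"
    by (simp add: ac_simps)
  finally show "h = ucoeff (Useries f * Useries g * partition_gf_inv)"
    by (simp add: partition_gf_inv_mult Useries_eq_iff)
next
  show "ubracket (ucoeff (Useries f * Useries g * partition_gf_inv)) = umul (ubracket f) (ubracket g)"
    by (simp add: ubracket_conv ucoeff_mult[symmetric] mult_ac)
qed

definition euler :: "useries_ring \<Rightarrow> useries_ring" where
  "euler x = Useries (\<lambda>p. of_nat (psize p) * ucoeff x p)"

lemma ucoeff_euler [simp]: "ucoeff (euler x) p = of_nat (psize p) * ucoeff x p"
  by (simp add: euler_def)

lemma euler_add: "euler (x + y) = euler x + euler y"
  by (rule useries_eqI) (simp add: distrib_left)

lemma euler_uconst_mult: "euler (uconst c * x) = uconst c * euler x"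
  by (rule useries_eqI) (simp add: mult.left_commute)

lemma euler_mult: "euler (x * y) = euler x * y + x * euler y"
proof (rule useries_eqI)
  fix p
  have "ucoeff (euler (x * y)) p
      = (\<Sum>(a, b)\<in>splittings p. of_nat (psize a) * ucoeff x a * ucoeff y b + ucoeff x a * (of_nat (psize b) * ucoeff y b))"
    unfolding ucoeff_euler ucoeff_mult umul_splittings sum_distrib_left
    by (intro sum.cong) (auto simp: splittings_def algebra_simps)
  also have "\<dots> = ucoeff (euler x * y + x * euler y) p"
    by (simp add: ucoeff_mult umul_splittings split_def sum.distrib)
  finally show "ucoeff (euler (x * y)) p = ucoeff (euler x * y + x * euler y) p" .
qed

lemma Useries_S2_mult: "Useries (\<lambda>p. S2 p * f p) = euler (Useries f) - uconst (1/24) * Useries f"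
  by (rule useries_eqI) (simp add: S2_def left_diff_distrib add.commute)

lemma Dop_conv: "Useries (Dop f) = partition_gf * euler (Useries f * partition_gf_inv)"
proof -
  let ?F = "Useries f" and ?Z = partition_gf and ?Zi = partition_gf_inv and ?c = "uconst (1/24)"
  have leibniz: "euler ?F = euler ?Z * (?F * ?Zi) + ?Z * euler (?F * ?Zi)"
    using euler_mult[of ?Z "?F * ?Zi"] by (simp add: partition_gf_mult_cancel)
  have "Useries (Dop f) = Useries (\<lambda>p. S2 p * f p) - Useries (\<lambda>p. S2 p * 1) * ?F * ?Zi"
    by (simp add: Dop_def odot_conv ucoeff_inject[symmetric] fun_eq_iff)
  also have "\<dots> = (euler ?F - ?c * ?F) - (euler ?Z - ?c * ?Z) * ?F * ?Zi"
    unfolding Useries_S2_mult by (simp add: partition_gf_def)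
  also have "\<dots> = euler ?F - euler ?Z * (?F * ?Zi)"
    by (simp add: left_diff_distrib mult.assoc partition_gf_mult_cancel)
  finally show ?thesis
    using leibniz by simp
qed

lemma Dop_linear: "Dop (\<lambda>p. a * f p + b * g p) = (\<lambda>p. a * Dop f p + b * Dop g p)"
proof -
  have lin: "Useries (\<lambda>p. a * f p + b * g p) = uconst a * Useries f + uconst b * Useries g"
    by (rule useries_eqI) simp
  let ?Z = partition_gf and ?Zi = partition_gf_inv
  have "Useries (Dop (\<lambda>p. a * f p + b * g p))
      = ?Z * euler (uconst a * (Useries f * ?Zi) + uconst b * (Useries g * ?Zi))"
    by (simp add: Dop_conv lin distrib_right mult.assoc)
  also have "\<dots> = uconst a * (?Z * euler (Useries f * ?Zi)) + uconst b * (?Z * euler (Useries g * ?Zi))"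
    by (simp add: euler_add euler_uconst_mult distrib_left mult.left_commute)
  finally have "Useries (Dop (\<lambda>p. a * f p + b * g p)) = uconst a * Useries (Dop f) + uconst b * Useries (Dop g)"
    by (simp add: Dop_conv)
  then show ?thesis
    by (simp add: Useries_eq_iff fun_eq_iff)
qed

lemma Dop_odot: "Dop (odot f g) = (\<lambda>p. odot (Dop f) g p + odot f (Dop g) p)"
proof -
  let ?F = "Useries f" and ?G = "Useries g" and ?Z = partition_gf and ?Zi = partition_gf_inv
  have "Useries (Dop (odot f g)) = ?Z * euler ((?F * ?Zi) * (?G * ?Zi))"
    by (simp add: Dop_conv odot_conv mult_ac)
  also have "\<dots> = Useries (Dop f) * ?G * ?Zi + ?F * Useries (Dop g) * ?Zi"
    by (simp add: euler_mult Dop_conv algebra_simps)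
  finally show ?thesis
    by (simp add: odot_conv Useries_eq_iff fun_eq_iff)
qed

unbundle fps_syntax

(* The substitution u_i := q^i. *)
definition specialize_q :: "useries_ring \<Rightarrow> rat fps" where
  "specialize_q x = Abs_fps (\<lambda>n. \<Sum>p | psize p = n. ucoeff x p)"

lemma specialize_q_nth [simp]: "specialize_q x $ n = (\<Sum>p | psize p = n. ucoeff x p)"
  by (simp add: specialize_q_def)

lemma finite_psize_sum_eq: "finite {(a, b). psize a + psize b = n}"
  by (rule finite_subset[OF _ finite_cartesian_product[OF finite_psize_le[of n] finite_psize_le[of n]]]) auto

lemma sum_psize_splittings:
  "(\<Sum>p | psize p = n. \<Sum>(a, b)\<in>splittings p. h a b) = (\<Sum>(a, b) | psize a + psize b = n. h a b)"
proof -
  let ?S = "{(a, b). psize a + psize b = n}"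
  have fibre: "{z \<in> ?S. fst z + snd z = p} = splittings p" if "p \<in> {p. psize p = n}" for p
  proof (intro equalityI subsetI)
    fix z assume "z \<in> {z \<in> ?S. fst z + snd z = p}"
    then show "z \<in> splittings p"
      by (cases z) (simp add: splittings_def)
  next
    fix z assume "z \<in> splittings p"
    then show "z \<in> {z \<in> ?S. fst z + snd z = p}"
      using that by (cases z) (auto simp: splittings_def)
  qed
  have "(\<Sum>(a, b) | psize a + psize b = n. h a b)
      = (\<Sum>p | psize p = n. \<Sum>z\<in>{z \<in> ?S. fst z + snd z = p}. case_prod h z)"
    by (rule sum.group[symmetric]) (auto simp: finite_psize_sum_eq finite_psize_eq)
  also have "\<dots> = (\<Sum>p | psize p = n. \<Sum>(a, b)\<in>splittings p. h a b)"
  proof (rule sum.cong[OF refl])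
    fix p assume "p \<in> {p. psize p = n}"
    then show "(\<Sum>z\<in>{z \<in> ?S. fst z + snd z = p}. case_prod h z) = (\<Sum>(a, b)\<in>splittings p. h a b)"
      by (simp only: fibre)
  qed
  finally show ?thesis ..
qed

lemma sum_psize_product:
  fixes x y :: "partition \<Rightarrow> 'a :: comm_semiring_0"
  shows "(\<Sum>i=0..n. (\<Sum>a | psize a = i. x a) * (\<Sum>b | psize b = n - i. y b))
     = (\<Sum>(a, b) | psize a + psize b = n. x a * y b)"
proof -
  let ?S = "{(a, b). psize a + psize b = n}"
  have fibre: "{z \<in> ?S. psize (fst z) = i} = {a. psize a = i} \<times> {b. psize b = n - i}"
    if "i \<in> {0..n}" for i
    using that by auto
  have "(\<Sum>(a, b) | psize a + psize b = n. x a * y b)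
      = (\<Sum>i=0..n. \<Sum>z\<in>{z \<in> ?S. psize (fst z) = i}. (\<lambda>(a, b). x a * y b) z)"
    by (rule sum.group[symmetric]) (auto simp: finite_psize_sum_eq)
  also have "\<dots> = (\<Sum>i=0..n. \<Sum>z\<in>{a. psize a = i} \<times> {b. psize b = n - i}. (\<lambda>(a, b). x a * y b) z)"
  proof (rule sum.cong[OF refl])
    fix i assume "i \<in> {0..n}"
    then show "(\<Sum>z\<in>{z \<in> ?S. psize (fst z) = i}. (\<lambda>(a, b). x a * y b) z)
        = (\<Sum>z\<in>{a. psize a = i} \<times> {b. psize b = n - i}. (\<lambda>(a, b). x a * y b) z)"
      by (simp only: fibre)
  qed
  also have "\<dots> = (\<Sum>i=0..n. (\<Sum>a | psize a = i. x a) * (\<Sum>b | psize b = n - i. y b))"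
    by (simp add: sum_product sum.cartesian_product split_def)
  finally show ?thesis ..
qed

lemma specialize_q_mult: "specialize_q (x * y) = specialize_q x * specialize_q y"
  by (rule fps_ext)
    (simp add: ucoeff_mult umul_splittings sum_psize_splittings fps_mult_nth sum_psize_product)

lemma specialize_q_one: "specialize_q 1 = 1"
  by (rule fps_ext) (simp add: ucoeff_one finite_psize_eq)

lemma specialize_q_euler: "specialize_q (euler x) = fps_X * fps_deriv (specialize_q x)"
proof (rule fps_ext)
  fix n
  have "specialize_q (euler x) $ n = of_nat n * specialize_q x $ n"
    by (simp add: sum_distrib_left)
  then show "specialize_q (euler x) $ n = (fps_X * fps_deriv (specialize_q x)) $ n"
    by (cases n) (simp_all add: fps_deriv_nth)
qed

lemma qbracket_conv: "qbracket f = specialize_q (Useries f * partition_gf_inv)"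
proof -
  let ?P = "specialize_q partition_gf" and ?A = "specialize_q (Useries f)"
  have unit: "?P * specialize_q partition_gf_inv = 1"
    by (simp add: specialize_q_mult[symmetric] partition_gf_mult_inv specialize_q_one)
  then have "?P \<noteq> 0"
    by auto
  have "qbracket f = ?A / ?P"
    by (simp add: qbracket_def specialize_q_def)
  also have "\<dots> = (?A * specialize_q partition_gf_inv * ?P) / ?P"
    using unit by (metis mult.assoc mult.commute mult_1_right)
  also have "\<dots> = specialize_q (Useries f * partition_gf_inv)"
    using \<open>?P \<noteq> 0\<close> by (simp add: specialize_q_mult)
  finally show ?thesis .
qed

lemma qbracket_Dop: "fps_X * fps_deriv (qbracket f) = qbracket (Dop f)"
proof -
  have "qbracket (Dop f) = specialize_q (euler (Useries f * partition_gf_inv))"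
    by (simp add: qbracket_conv Dop_conv mult.assoc partition_gf_mult_cancel)
  then show ?thesis
    by (simp add: qbracket_conv specialize_q_euler)
qed

theorem proposition5p1p1:
  shows "(\<forall>(a::rat) b f g. Dop (\<lambda>p. a * f p + b * g p) = (\<lambda>p. a * Dop f p + b * Dop g p))
       \<and> (\<forall>f g. Dop (odot f g) = (\<lambda>p. odot (Dop f) g p + odot f (Dop g) p))
       \<and> (\<forall>f. fps_X * fps_deriv (qbracket f) = qbracket (Dop f))"
  using Dop_linear Dop_odot qbracket_Dop by blast

end
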